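(* Let $\Delta_{\mu,\nu}(x)=[\tilde{t}_{\mu,\nu}(x)]^2-\tilde{t}_{\mu-1,\nu-1}(x)\tilde{t}_{\mu+1,\nu+1}(x)$. Suppose that $\mu>-3$ and $|\nu|<\mu+3$. Then, for all $x>0$, $$0<\frac{2(\frac{1}{2}x)^{2\mu+2}}{(\mu+\nu+3)\big[\Gamma(\frac{\mu-\nu+3}{2})\Gamma(\frac{\mu+\nu+3}{2})\big]^2}\leq\Delta_{\mu,\nu}(x)\leq\frac{2[\tilde{t}_{\mu,\nu}(x)]^2}{\mu+\nu+3}.$$
   Context: For real $\mu,\nu$ the (normalized) modified Lommel function of the first kind is $$\tilde{t}_{\mu,\nu}(x)=\sum_{k=0}^\infty\frac{(\frac{1}{2}x)^{\mu+2k+1}}{\Gamma\big(k+\frac{\mu-\nu+3}{2}\big)\Gamma\big(k+\frac{\mu+\nu+3}{2}\big)},\quad x>0.$$ *)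

theory Defs
  imports "HOL-Analysis.Analysis"
begin

text \<open>At poles of Gamma, Isabelle's Gamma is 0 and division by 0 yields 0, which agrees
  with the standard convention 1/Gamma = 0 there.\<close>
definition lommel_t :: "real \<Rightarrow> real \<Rightarrow> real \<Rightarrow> real" where
  "lommel_t mu nu x =
     (\<Sum>k. (x / 2) powr (mu + 2 * real k + 1) /
            (Gamma (real k + (mu - nu + 3) / 2) * Gamma (real k + (mu + nu + 3) / 2)))"

definition lommel_Delta :: "real \<Rightarrow> real \<Rightarrow> real \<Rightarrow> real" where
  "lommel_Delta mu nu x =
     (lommel_t mu nu x)^2 - lommel_t (mu - 1) (nu - 1) x * lommel_t (mu + 1) (nu + 1) x"

end

theory Submission
  imports Defs "HOL-Real_Asymp.Real_Asymp"
begin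

(* With a = (mu - nu + 3)/2, b = (mu + nu + 3)/2, z = (x/2)^2 and c_k = 1/(Gamma(k + a) Gamma(k + b)),
   t_{mu,nu}(x) = (x/2)^(mu+1) F_b(z) where F_b(z) = sum_k c_k z^k. Shifting (mu, nu) by -1 or +1
   only replaces b by b - 1 or b + 1, which multiplies c_k by k + b - 1 or divides it by k + b.
   Multiplying out the Cauchy products, Delta = (x/2)^(2mu+2) sum_n z^n T_n with
   T_n = sum_{i<=n} c_i c_{n-i} (1 - (i + b - 1)/(n - i + b)).
   Pairing the terms i and n - i bounds T_n by (sum_{i<=n} c_i c_{n-i})/b, whence the upper bound.
   Pairing i + 1 with n - i instead, the recurrence c_{k+1} = c_k/((k + a)(k + b)) turns every pair
   into a square, so T_n >= 0 and Delta is at least its n = 0 term c_0^2/b. *)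

lemma summable_norm_if_ratio_tendsto_0:
  fixes f :: "nat \<Rightarrow> 'a::real_normed_vector"
  assumes nz: "eventually (\<lambda>n. f n \<noteq> 0) sequentially"
    and ratio: "(\<lambda>n. norm (f (Suc n)) / norm (f n)) \<longlonglongrightarrow> 0"
  shows "summable (\<lambda>n. norm (f n))"
proof -
  have "eventually (\<lambda>n. norm (f (Suc n)) / norm (f n) < 1 / 2) sequentially"
    using order_tendstoD(2)[OF ratio, of "1 / 2"] by simp
  with nz have "eventually (\<lambda>n. f n \<noteq> 0 \<and> norm (f (Suc n)) / norm (f n) < 1 / 2) sequentially"
    by (rule eventually_conj)
  then obtain N where N: "\<And>n. n \<ge> N \<Longrightarrow> f n \<noteq> 0 \<and> norm (f (Suc n)) / norm (f n) < 1 / 2"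
    unfolding eventually_sequentially by blast
  show ?thesis
  proof (rule summable_ratio_test[of "1 / 2" N])
    fix n assume "n \<ge> N"
    with N[of n] show "norm (norm (f (Suc n))) \<le> 1 / 2 * norm (norm (f n))"
      by (auto simp: divide_simps)
  qed simp
qed

lemma sum_atMost_le_by_reflection:
  fixes f g :: "nat \<Rightarrow> real"
  assumes "\<And>i. i \<le> n \<Longrightarrow> f i + f (n - i) \<le> g i + g (n - i)"
  shows "(\<Sum>i\<le>n. f i) \<le> (\<Sum>i\<le>n. g i)"
proof -
  have rev: "(\<Sum>i\<le>n. h (n - i)) = (\<Sum>i\<le>n. h i)" for h :: "nat \<Rightarrow> real"
    using sum.atLeastAtMost_rev[of h 0 n] by (simp add: atLeast0AtMost)
  have "(\<Sum>i\<le>n. f i) + (\<Sum>i\<le>n. f i) = (\<Sum>i\<le>n. f i + f (n - i))"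
    by (simp add: sum.distrib rev)
  also have "\<dots> \<le> (\<Sum>i\<le>n. g i + g (n - i))"
    using assms by (intro sum_mono) simp
  also have "\<dots> = (\<Sum>i\<le>n. g i) + (\<Sum>i\<le>n. g i)"
    by (simp add: sum.distrib rev)
  finally show ?thesis by linarith
qed

lemma power_series_Cauchy_product_sums:
  fixes a b :: "nat \<Rightarrow> 'a::{real_normed_field,banach}"
  assumes "summable (\<lambda>k. norm (a k * z ^ k))" and "summable (\<lambda>k. norm (b k * z ^ k))"
  shows "(\<lambda>n. z ^ n * (\<Sum>i\<le>n. a i * b (n - i)))
           sums ((\<Sum>k. a k * z ^ k) * (\<Sum>k. b k * z ^ k))"
proof -
  have "(\<Sum>i\<le>n. a i * z ^ i * (b (n - i) * z ^ (n - i))) = z ^ n * (\<Sum>i\<le>n. a i * b (n - i))" for n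
    unfolding sum_distrib_left
    by (intro sum.cong refl) (simp add: power_add[symmetric] algebra_simps)
  then show ?thesis
    using Cauchy_product_sums[OF assms] by simp
qed

definition turan_coeff :: "(nat \<Rightarrow> real) \<Rightarrow> real \<Rightarrow> nat \<Rightarrow> real" where
  "turan_coeff c b n = (\<Sum>i\<le>n. c i * c (n - i) * (1 - (real i + b - 1) / (real (n - i) + b)))"

lemma turan_coeff_0: "b \<noteq> 0 \<Longrightarrow> turan_coeff c b 0 = c 0 ^ 2 / b"
  by (simp add: turan_coeff_def power2_eq_square field_simps)

lemma turan_pair_eq:
  fixes c :: "nat \<Rightarrow> real"
  assumes a: "a > 0" and b: "b > 0"
    and c_Suc: "\<And>k. c (Suc k) = c k / ((real k + a) * (real k + b))"
  shows "c (Suc p) * c q * (1 - (real p + b) / (real q + b))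
           + c (Suc q) * c p * (1 - (real q + b) / (real p + b))
         = c p * c q * (real q - real p) ^ 2
             / ((real p + a) * (real q + a) * (real p + b) * (real q + b))"
proof -
  have "real p + a > 0" "real q + a > 0" "real p + b > 0" "real q + b > 0"
    using a b by auto
  then show ?thesis
    unfolding c_Suc by (simp add: divide_simps power2_eq_square) (simp add: algebra_simps)
qed

lemma turan_coeff_nonneg:
  fixes c :: "nat \<Rightarrow> real"
  assumes a: "a > 0" and b: "b > 0" and c_nonneg: "\<And>k. c k \<ge> 0"
    and c_Suc: "\<And>k. c (Suc k) = c k / ((real k + a) * (real k + b))"
  shows "turan_coeff c b n \<ge> 0"
proof (cases n)
  case 0
  then show ?thesis using b c_nonneg[of 0] by (simp add: turan_coeff_0)
next
  case (Suc m)
  define T where "T i = c i * c (Suc m - i) * (1 - (real i + b - 1) / (real (Suc m - i) + b))" for i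
  have "T 0 \<ge> 0"
    unfolding T_def using b c_nonneg by (intro mult_nonneg_nonneg) (auto simp: field_simps)
  moreover have "(\<Sum>p\<le>m. T (Suc p)) \<ge> (\<Sum>p\<le>m. 0)"
  proof (rule sum_atMost_le_by_reflection)
    fix p assume "p \<le> m"
    define q where "q = m - p"
    have "Suc m - Suc p = q" "Suc m - Suc q = p" "Suc m - p = Suc q"
      using \<open>p \<le> m\<close> by (auto simp: q_def)
    moreover have "real (Suc j) + b - 1 = real j + b" for j by simp
    ultimately have "T (Suc p) + T (Suc q)
      = c p * c q * (real q - real p) ^ 2 / ((real p + a) * (real q + a) * (real p + b) * (real q + b))"
      unfolding T_def using turan_pair_eq[OF a b c_Suc, of p q] by (simp only:)
    also have "\<dots> \<ge> 0" using a b c_nonneg by simp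
    finally show "0 + 0 \<le> T (Suc p) + T (Suc (m - p))" by (simp add: q_def)
  qed
  ultimately show ?thesis
    unfolding turan_coeff_def Suc sum.atMost_Suc_shift T_def[symmetric] by simp
qed

lemma turan_pair_weight_le:
  fixes k l b :: real
  assumes "k \<ge> 0" and "l \<ge> 0" and "b > 0"
  shows "(1 - (k + b - 1) / (l + b)) + (1 - (l + b - 1) / (k + b)) \<le> 2 / b"
proof -
  have "k + b > 0" "l + b > 0" using assms by auto
  with \<open>b > 0\<close> have "2 / b - ((1 - (k + b - 1) / (l + b)) + (1 - (l + b - 1) / (k + b)))
        = (2 * k * l + b * (k + l) + b * (l - k) ^ 2) / (b * (k + b) * (l + b))"
    by (simp add: divide_simps) (simp add: algebra_simps power2_eq_square)
  also have "\<dots> \<ge> 0" using assms by simp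
  finally show ?thesis by simp
qed

lemma turan_coeff_le:
  fixes c :: "nat \<Rightarrow> real"
  assumes b: "b > 0" and c_nonneg: "\<And>k. c k \<ge> 0"
  shows "turan_coeff c b n \<le> (\<Sum>i\<le>n. c i * c (n - i)) / b"
  unfolding turan_coeff_def sum_divide_distrib
proof (rule sum_atMost_le_by_reflection)
  fix i assume i: "i \<le> n"
  have "c i * c (n - i) * (1 - (real i + b - 1) / (real (n - i) + b))
          + c (n - i) * c (n - (n - i)) * (1 - (real (n - i) + b - 1) / (real (n - (n - i)) + b))
        = c i * c (n - i) * ((1 - (real i + b - 1) / (real (n - i) + b))
                             + (1 - (real (n - i) + b - 1) / (real i + b)))"
    using i by (simp add: algebra_simps)
  also have "\<dots> \<le> c i * c (n - i) * (2 / b)"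
    using b c_nonneg by (intro mult_left_mono turan_pair_weight_le) auto
  also have "\<dots> = c i * c (n - i) / b + c (n - i) * c (n - (n - i)) / b"
    using i by simp
  finally show "c i * c (n - i) * (1 - (real i + b - 1) / (real (n - i) + b))
          + c (n - i) * c (n - (n - i)) * (1 - (real (n - i) + b - 1) / (real (n - (n - i)) + b))
        \<le> c i * c (n - i) / b + c (n - i) * c (n - (n - i)) / b" .
qed

lemma rGamma_real_pos: "x > 0 \<Longrightarrow> rGamma (x :: real) > 0"
  by (simp add: rGamma_inverse_Gamma)

lemma rGamma_plus1_eq: "s \<noteq> 0 \<Longrightarrow> rGamma (s + 1) = rGamma s / s"
  using rGamma_plus1[of s] by (simp add: field_simps)

definition lommel_coeff :: "real \<Rightarrow> real \<Rightarrow> nat \<Rightarrow> real" where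
  "lommel_coeff a b k = rGamma (real k + a) * rGamma (real k + b)"

definition lommel_series :: "real \<Rightarrow> real \<Rightarrow> real \<Rightarrow> real" where
  "lommel_series a b z = (\<Sum>k. lommel_coeff a b k * z ^ k)"

lemma lommel_coeff_pos: "a > 0 \<Longrightarrow> b > 0 \<Longrightarrow> lommel_coeff a b k > 0"
  by (simp add: lommel_coeff_def rGamma_real_pos)

lemma lommel_coeff_Suc:
  assumes "real k + a \<noteq> 0" and "real k + b \<noteq> 0"
  shows "lommel_coeff a b (Suc k) = lommel_coeff a b k / ((real k + a) * (real k + b))"
proof -
  have Suc_shift: "real (Suc k) + s = (real k + s) + 1" for s by simp
  show ?thesis
    unfolding lommel_coeff_def Suc_shift
    using rGamma_plus1_eq[OF assms(1)] rGamma_plus1_eq[OF assms(2)] by simp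
qed

lemma lommel_coeff_minus1: "lommel_coeff a (b - 1) k = (real k + b - 1) * lommel_coeff a b k"
  using rGamma_plus1[of "real k + b - 1"] by (simp add: lommel_coeff_def algebra_simps)

lemma lommel_coeff_plus1:
  "real k + b \<noteq> 0 \<Longrightarrow> lommel_coeff a (b + 1) k = lommel_coeff a b k / (real k + b)"
  using rGamma_plus1_eq[of "real k + b"] by (simp add: lommel_coeff_def add.assoc)

lemma summable_lommel_series: "summable (\<lambda>k. norm (lommel_coeff a b k * z ^ k))"
proof (cases "z = 0")
  case True
  show ?thesis
    by (rule summable_finite[of "{0}"]) (auto simp: True)
next
  case False
  have "eventually (\<lambda>k. real k + a > 0) sequentially" "eventually (\<lambda>k. real k + b > 0) sequentially"
    by real_asymp+
  then have pos: "eventually (\<lambda>k. real k + a > 0 \<and> real k + b > 0) sequentially"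
    by (rule eventually_conj)
  show ?thesis
  proof (rule summable_norm_if_ratio_tendsto_0)
    from pos have "eventually (\<lambda>k. lommel_coeff a b k > 0) sequentially"
      by eventually_elim (simp add: lommel_coeff_def rGamma_real_pos)
    then show nz: "eventually (\<lambda>k. lommel_coeff a b k * z ^ k \<noteq> 0) sequentially"
      by eventually_elim (use False in auto)
    have "(\<lambda>k. \<bar>z\<bar> / ((real k + a) * (real k + b))) \<longlonglongrightarrow> 0"
      by real_asymp
    moreover have "eventually (\<lambda>k. \<bar>z\<bar> / ((real k + a) * (real k + b))
        = norm (lommel_coeff a b (Suc k) * z ^ Suc k) / norm (lommel_coeff a b k * z ^ k)) sequentially"
      using eventually_conj[OF pos nz]
      by eventually_elim (auto simp: lommel_coeff_Suc abs_mult)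
    ultimately show "(\<lambda>k. norm (lommel_coeff a b (Suc k) * z ^ Suc k)
                        / norm (lommel_coeff a b k * z ^ k)) \<longlonglongrightarrow> 0"
      by (rule Lim_transform_eventually)
  qed
qed

lemma lommel_series_square_sums:
  "(\<lambda>n. z ^ n * (\<Sum>i\<le>n. lommel_coeff a b i * lommel_coeff a b (n - i)))
     sums (lommel_series a b z ^ 2)"
  unfolding lommel_series_def power2_eq_square
  by (intro power_series_Cauchy_product_sums summable_lommel_series)

lemma lommel_series_turan_sums:
  assumes "b > 0"
  shows "(\<lambda>n. z ^ n * turan_coeff (lommel_coeff a b) b n)
           sums (lommel_series a b z ^ 2 - lommel_series a (b - 1) z * lommel_series a (b + 1) z)"
proof -
  let ?c = "lommel_coeff a b"
  have "(\<lambda>n. z ^ n * (\<Sum>i\<le>n. lommel_coeff a (b - 1) i * lommel_coeff a (b + 1) (n - i)))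
          sums (lommel_series a (b - 1) z * lommel_series a (b + 1) z)"
    unfolding lommel_series_def by (intro power_series_Cauchy_product_sums summable_lommel_series)
  moreover have "z ^ n * turan_coeff ?c b n
      = z ^ n * (\<Sum>i\<le>n. ?c i * ?c (n - i))
        - z ^ n * (\<Sum>i\<le>n. lommel_coeff a (b - 1) i * lommel_coeff a (b + 1) (n - i))" for n
  proof -
    have "lommel_coeff a (b - 1) i * lommel_coeff a (b + 1) (n - i)
            = ?c i * ?c (n - i) * ((real i + b - 1) / (real (n - i) + b))" for i
      using assms by (simp add: lommel_coeff_minus1 lommel_coeff_plus1)
    then show ?thesis
      by (simp add: turan_coeff_def right_diff_distrib sum_subtractf)
  qed
  ultimately show ?thesis
    using sums_diff[OF lommel_series_square_sums] by presburger
qed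

lemma lommel_series_turan_lower:
  assumes "a > 0" and "b > 0" and "z \<ge> 0"
  shows "(rGamma a * rGamma b) ^ 2 / b
           \<le> lommel_series a b z ^ 2 - lommel_series a (b - 1) z * lommel_series a (b + 1) z"
proof -
  let ?c = "lommel_coeff a b"
  note sums = lommel_series_turan_sums[OF \<open>b > 0\<close>, of z a]
  have "turan_coeff ?c b n \<ge> 0" for n
    using assms lommel_coeff_pos[of a b]
    by (intro turan_coeff_nonneg[of a]) (auto simp: lommel_coeff_Suc less_imp_le)
  then have "(\<Sum>n\<in>{0}. z ^ n * turan_coeff ?c b n) \<le> (\<Sum>n. z ^ n * turan_coeff ?c b n)"
    using \<open>z \<ge> 0\<close> by (intro sum_le_suminf sums_summable[OF sums]) auto
  moreover have "turan_coeff ?c b 0 = (rGamma a * rGamma b) ^ 2 / b"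
    using \<open>b > 0\<close> by (simp add: turan_coeff_0 lommel_coeff_def)
  ultimately show ?thesis
    using sums_unique[OF sums] by simp
qed

lemma lommel_series_turan_upper:
  assumes "a > 0" and "b > 0" and "z \<ge> 0"
  shows "lommel_series a b z ^ 2 - lommel_series a (b - 1) z * lommel_series a (b + 1) z
           \<le> lommel_series a b z ^ 2 / b"
proof (rule sums_le[OF _ lommel_series_turan_sums[OF \<open>b > 0\<close>]
                        sums_divide[OF lommel_series_square_sums]])
  fix n
  have "turan_coeff (lommel_coeff a b) b n
          \<le> (\<Sum>i\<le>n. lommel_coeff a b i * lommel_coeff a b (n - i)) / b"
    using assms lommel_coeff_pos[of a b] by (intro turan_coeff_le) (auto simp: less_imp_le)
  then show "z ^ n * turan_coeff (lommel_coeff a b) b n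
      \<le> z ^ n * (\<Sum>i\<le>n. lommel_coeff a b i * lommel_coeff a b (n - i)) / b"
    using \<open>z \<ge> 0\<close>
    by (simp add: mult_left_mono times_divide_eq_right[symmetric] del: times_divide_eq_right)
qed

lemma lommel_t_eq_lommel_series:
  assumes "x > 0"
  shows "lommel_t mu nu x
           = (x / 2) powr (mu + 1) * lommel_series ((mu - nu + 3) / 2) ((mu + nu + 3) / 2) ((x / 2) ^ 2)"
proof -
  have powr_eq: "(x / 2) powr (mu + 2 * real k + 1) = (x / 2) powr (mu + 1) * ((x / 2) ^ 2) ^ k" for k
  proof -
    have "mu + 2 * real k + 1 = (mu + 1) + real (2 * k)" by simp
    then have "(x / 2) powr (mu + 2 * real k + 1) = (x / 2) powr (mu + 1) * (x / 2) powr real (2 * k)"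
      by (simp only: powr_add)
    also have "(x / 2) powr real (2 * k) = (x / 2) ^ (2 * k)"
      using assms by (intro powr_realpow) simp
    also have "\<dots> = ((x / 2) ^ 2) ^ k"
      by (rule power_mult)
    finally show ?thesis .
  qed
  have "lommel_t mu nu x = (\<Sum>k. (x / 2) powr (mu + 1)
          * (lommel_coeff ((mu - nu + 3) / 2) ((mu + nu + 3) / 2) k * ((x / 2) ^ 2) ^ k))"
    unfolding lommel_t_def powr_eq lommel_coeff_def rGamma_inverse_Gamma
    by (simp only: divide_inverse inverse_mult_distrib ac_simps)
  also have "\<dots> = (x / 2) powr (mu + 1)
                   * lommel_series ((mu - nu + 3) / 2) ((mu + nu + 3) / 2) ((x / 2) ^ 2)"
    unfolding lommel_series_def by (rule suminf_mult[OF summable_norm_cancel[OF summable_lommel_series]])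
  finally show ?thesis .
qed

lemma lommel_t_square_eq_lommel_series:
  assumes "x > 0"
  shows "(lommel_t mu nu x) ^ 2 = (x / 2) powr (2 * mu + 2)
           * lommel_series ((mu - nu + 3) / 2) ((mu + nu + 3) / 2) ((x / 2) ^ 2) ^ 2"
proof -
  have "((x / 2) powr (mu + 1)) ^ 2 = (x / 2) powr (2 * mu + 2)"
    by (simp add: power2_eq_square flip: powr_add)
  then show ?thesis
    unfolding lommel_t_eq_lommel_series[OF assms] by (simp add: power_mult_distrib)
qed

lemma lommel_Delta_eq_lommel_series:
  fixes mu nu x :: real
  assumes "x > 0"
  defines "a \<equiv> (mu - nu + 3) / 2" and "b \<equiv> (mu + nu + 3) / 2" and "z \<equiv> (x / 2) ^ 2"
  shows "lommel_Delta mu nu x = (x / 2) powr (2 * mu + 2)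
           * (lommel_series a b z ^ 2 - lommel_series a (b - 1) z * lommel_series a (b + 1) z)"
proof -
  have params: "(mu - 1 - (nu - 1) + 3) / 2 = a" "(mu - 1 + (nu - 1) + 3) / 2 = b - 1"
       "(mu + 1 - (nu + 1) + 3) / 2 = a" "(mu + 1 + (nu + 1) + 3) / 2 = b + 1"
    unfolding a_def b_def by (simp_all add: field_simps)
  have powers: "(x / 2) powr (mu - 1 + 1) * (x / 2) powr (mu + 1 + 1) = (x / 2) powr (2 * mu + 2)"
    by (simp add: algebra_simps flip: powr_add)
  have "lommel_Delta mu nu x
      = (x / 2) powr (2 * mu + 2) * lommel_series a b z ^ 2
        - ((x / 2) powr (mu - 1 + 1) * (x / 2) powr (mu + 1 + 1))
          * (lommel_series a (b - 1) z * lommel_series a (b + 1) z)"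
    unfolding lommel_Delta_def lommel_t_square_eq_lommel_series[OF assms(1)]
    unfolding lommel_t_eq_lommel_series[OF assms(1)] params
      a_def[symmetric] b_def[symmetric] z_def[symmetric]
    by (simp only: ac_simps)
  then show ?thesis
    unfolding powers by (simp add: right_diff_distrib)
qed

theorem theorem3p4:
  fixes mu nu x :: real
  assumes "mu > -3" and "\<bar>nu\<bar> < mu + 3" and "x > 0"
  shows "0 < 2 * (x / 2) powr (2 * mu + 2) /
               ((mu + nu + 3) * (Gamma ((mu - nu + 3) / 2) * Gamma ((mu + nu + 3) / 2))^2)
       \<and> 2 * (x / 2) powr (2 * mu + 2) /
               ((mu + nu + 3) * (Gamma ((mu - nu + 3) / 2) * Gamma ((mu + nu + 3) / 2))^2)
           \<le> lommel_Delta mu nu x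
       \<and> lommel_Delta mu nu x \<le> 2 * (lommel_t mu nu x)^2 / (mu + nu + 3)"
proof -
  define a b z Y where "a = (mu - nu + 3) / 2" and "b = (mu + nu + 3) / 2"
    and "z = (x / 2) ^ 2" and "Y = (x / 2) powr (2 * mu + 2)"
  have a: "a > 0" and b: "b > 0" and z: "z \<ge> 0" and Y: "Y > 0" and sum_eq: "mu + nu + 3 = 2 * b"
    using assms by (auto simp: a_def b_def z_def Y_def)
  have "2 * (x / 2) powr (2 * mu + 2) /
      ((mu + nu + 3) * (Gamma ((mu - nu + 3) / 2) * Gamma ((mu + nu + 3) / 2))^2)
      = Y * ((rGamma a * rGamma b) ^ 2 / b)"
    using sum_eq Gamma_real_pos[OF a] Gamma_real_pos[OF b]
    unfolding Y_def[symmetric] a_def[symmetric] b_def[symmetric]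
    by (simp add: rGamma_inverse_Gamma power_mult_distrib field_simps)
  moreover have "2 * (lommel_t mu nu x)^2 / (mu + nu + 3) = Y * (lommel_series a b z ^ 2 / b)"
    unfolding lommel_t_square_eq_lommel_series[OF \<open>x > 0\<close>]
      Y_def[symmetric] a_def[symmetric] b_def[symmetric] z_def[symmetric] sum_eq
    using b by simp
  moreover have "lommel_Delta mu nu x
      = Y * (lommel_series a b z ^ 2 - lommel_series a (b - 1) z * lommel_series a (b + 1) z)"
    unfolding Y_def a_def b_def z_def by (rule lommel_Delta_eq_lommel_series[OF \<open>x > 0\<close>])
  moreover have pos: "0 < (rGamma a * rGamma b) ^ 2 / b"
    using rGamma_real_pos[OF a] rGamma_real_pos[OF b] b by (intro divide_pos_pos) auto
  ultimately show ?thesis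
    using mult_pos_pos[OF Y pos] mult_left_mono[OF lommel_series_turan_lower[OF a b z], of Y]
      mult_left_mono[OF lommel_series_turan_upper[OF a b z], of Y] Y
    by simp
qed

end
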